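(* For every $\gamma>0$, every integer $N>1$ and every $\varepsilon>0$, for all $L$ large enough, $$\mathbb{P}_{N,\gamma}\big(G_N\text{ has more than }\varepsilon N\text{ edges with length larger than }L\big)\le\exp\{-L^{\gamma/8}N\}.$$
   Context: $\mathbb{P}_{N,\gamma}$ is the law of the random graph $G_N$ on vertex set $[N]=\{1,\dots,N\}$ containing all edges $\{x,x+1\}$ and in which each pair $\{x,y\}$ with $|x-y|>1$ is an edge independently with probability $\exp\{-|x-y|^\gamma\}$. The length of an edge $\{i,j\}$ is $|i-j|$. *)

theory Defs
  imports "HOL-Probability.Probability"
begin

text \<open>Unordered pairs {x,y} of [N] = {1..N} are represented as ordered pairs (x,y) with x < y.\<close>
definition vpairs :: "nat \<Rightarrow> (nat \<times> nat) set" where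
  "vpairs N = {(x, y). 1 \<le> x \<and> x < y \<and> y \<le> N}"

definition edge_prob :: "real \<Rightarrow> nat \<times> nat \<Rightarrow> real" where
  "edge_prob \<gamma> e = (if snd e - fst e = 1 then 1
                     else exp (- (real (snd e - fst e) powr \<gamma>)))"

definition rand_graph :: "nat \<Rightarrow> real \<Rightarrow> (nat \<times> nat) set pmf" where
  "rand_graph N \<gamma> =
     map_pmf (\<lambda>f. {e \<in> vpairs N. f e})
       (Pi_pmf (vpairs N) False (\<lambda>e. bernoulli_pmf (edge_prob \<gamma> e)))"

definition long_edges :: "real \<Rightarrow> (nat \<times> nat) set \<Rightarrow> (nat \<times> nat) set" where
  "long_edges L E = {e \<in> E. real (snd e - fst e) > L}"

end

theory Submission
  imports Defs "HOL-Real_Asymp.Real_Asymp"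
begin

text \<open>The number of long edges is a sum of independent Bernoulli variables, so an exponential
  Chernoff bound controls it through its mean. An edge of length k > L is present with
  probability exp(-k^\<gamma>) \<le> exp(-L^\<gamma>/2) / k^2 once L is large, and the sum of 1/k^2
  over all pairs of [N] is at most 2N, so the mean is at most 2N exp(-L^\<gamma>/2). Choosing the
  Chernoff parameter t = 2 L^(\<gamma>/8) / \<epsilon> makes the mean term harmless and yields the bound
  exp(-L^(\<gamma>/8) N).\<close>

lemma expectation_exp_card_Pi_pmf_bernoulli_le:
  fixes q :: "'a \<Rightarrow> real" and t :: real
  assumes "finite A" and "S \<subseteq> A" and q: "\<And>e. e \<in> A \<Longrightarrow> 0 \<le> q e \<and> q e \<le> 1"
  shows "measure_pmf.expectation (Pi_pmf A False (\<lambda>e. bernoulli_pmf (q e)))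
           (\<lambda>f. exp (t * real (card {e\<in>S. f e}))) \<le> exp ((exp t - 1) * (\<Sum>e\<in>S. q e))"
proof -
  define h where "h = (\<lambda>e b. exp (t * of_bool (e \<in> S \<and> b)))"
  have exp_card: "exp (t * real (card {e\<in>S. f e})) = (\<Prod>e\<in>A. h e (f e))" for f
  proof -
    have "{e\<in>S. f e} = A \<inter> {e. e \<in> S \<and> f e}" using assms(2) by blast
    then have "t * real (card {e\<in>S. f e}) = (\<Sum>e\<in>A. t * of_bool (e \<in> S \<and> f e))"
      using assms(1) by (simp add: sum_distrib_left[symmetric])
    then show ?thesis
      using exp_sum[OF assms(1), of "\<lambda>e. t * of_bool (e \<in> S \<and> f e)"] unfolding h_def by presburger
  qed
  have factor: "measure_pmf.expectation (bernoulli_pmf (q e)) (h e)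
      \<le> exp (of_bool (e \<in> S) * (q e * (exp t - 1)))" if "e \<in> A" for e
  proof (cases "e \<in> S")
    case True
    have "measure_pmf.expectation (bernoulli_pmf (q e)) (h e) = 1 + q e * (exp t - 1)"
      using True q[OF that] by (simp add: h_def algebra_simps)
    also have "\<dots> \<le> exp (q e * (exp t - 1))"
      by (rule exp_ge_add_one_self)
    finally show ?thesis using True by simp
  qed (simp add: h_def)
  have "measure_pmf.expectation (Pi_pmf A False (\<lambda>e. bernoulli_pmf (q e)))
           (\<lambda>f. exp (t * real (card {e\<in>S. f e})))
      = (\<Prod>e\<in>A. measure_pmf.expectation (bernoulli_pmf (q e)) (h e))"
    unfolding exp_card
    by (rule expectation_prod_Pi_pmf[OF assms(1)])
       (auto simp: h_def intro!: integrable_measure_pmf_finite)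
  also have "\<dots> \<le> (\<Prod>e\<in>A. exp (of_bool (e \<in> S) * (q e * (exp t - 1))))"
    by (rule prod_mono) (use factor in \<open>auto simp: h_def intro!: Bochner_Integration.integral_nonneg\<close>)
  also have "\<dots> = exp (\<Sum>e\<in>A. of_bool (e \<in> S) * (q e * (exp t - 1)))"
    using assms(1) by (rule exp_sum[symmetric])
  also have "(\<Sum>e\<in>A. of_bool (e \<in> S) * (q e * (exp t - 1))) = (exp t - 1) * (\<Sum>e\<in>S. q e)"
    using assms(1,2) by (simp add: Int_absorb1 sum_distrib_right mult.commute)
  finally show ?thesis .
qed

lemma prob_card_Pi_pmf_bernoulli_gt_le:
  fixes q :: "'a \<Rightarrow> real" and c t :: real
  assumes "finite A" and "S \<subseteq> A" and "\<And>e. e \<in> A \<Longrightarrow> 0 \<le> q e \<and> q e \<le> 1" and "t > 0"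
  shows "measure_pmf.prob (Pi_pmf A False (\<lambda>e. bernoulli_pmf (q e)))
           {f. real (card {e\<in>S. f e}) > c} \<le> exp ((exp t - 1) * (\<Sum>e\<in>S. q e) - t * c)"
proof -
  let ?P = "Pi_pmf A False (\<lambda>e. bernoulli_pmf (q e))"
  let ?X = "\<lambda>f. real (card {e\<in>S. f e})"
  have "integrable ?P (\<lambda>f. exp (t * ?X f))"
    using assms(1) by (intro integrable_measure_pmf_finite) (simp add: set_Pi_pmf finite_PiE_dflt)
  then have chernoff: "measure_pmf.prob ?P {f\<in>UNIV. ?X f \<ge> c}
      \<le> exp (- t * c) * measure_pmf.expectation ?P (\<lambda>f. exp (t * ?X f))"
    using measure_pmf.Chernoff_ineq_ge[where M = ?P and s = t and A = UNIV and f = ?X and a = c] \<open>t > 0\<close>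
    by (simp add: set_integrable_def set_integral_space[where M = "measure_pmf ?P", simplified])
  have "measure_pmf.prob ?P {f. ?X f > c} \<le> measure_pmf.prob ?P {f\<in>UNIV. ?X f \<ge> c}"
    by (rule measure_pmf.finite_measure_mono) auto
  also have "\<dots> \<le> exp (- t * c) * exp ((exp t - 1) * (\<Sum>e\<in>S. q e))"
    using chernoff expectation_exp_card_Pi_pmf_bernoulli_le[OF assms(1-3), where t = t]
    by (meson exp_ge_zero mult_left_mono order_trans)
  finally show ?thesis by (simp add: exp_add[symmetric])
qed

lemma finite_vpairs: "finite (vpairs N)"
  by (rule finite_subset[of _ "{1..N} \<times> {1..N}"]) (auto simp: vpairs_def)

lemma edge_prob_nonneg_le_one: "0 \<le> edge_prob \<gamma> e \<and> edge_prob \<gamma> e \<le> 1"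
  by (simp add: edge_prob_def)

lemma prob_rand_graph_long_edges_gt_le:
  assumes "t > 0"
  shows "measure_pmf.prob (rand_graph N \<gamma>) {E. real (card (long_edges L E)) > c}
           \<le> exp ((exp t - 1) * (\<Sum>e\<in>long_edges L (vpairs N). edge_prob \<gamma> e) - t * c)"
proof -
  have "long_edges L {e \<in> vpairs N. f e} = {e \<in> long_edges L (vpairs N). f e}" for f
    by (auto simp: long_edges_def)
  then have "(\<lambda>f. {e \<in> vpairs N. f e}) -` {E. real (card (long_edges L E)) > c}
      = {f. real (card {e \<in> long_edges L (vpairs N). f e}) > c}"
    by auto
  then show ?thesis
    unfolding rand_graph_def measure_map_pmf
    by (simp only:) (rule prob_card_Pi_pmf_bernoulli_gt_le,
        auto simp: finite_vpairs edge_prob_nonneg_le_one assms long_edges_def)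
qed

lemma sum_inverse_squares_le_two_minus: "n \<ge> 1 \<Longrightarrow> (\<Sum>j=1..n. 1 / real j ^ 2) \<le> 2 - 1 / real n"
proof (induction n rule: nat_induct_at_least)
  case (Suc n)
  have "1 / real (Suc n) ^ 2 \<le> 1 / (real n * (real n + 1))"
    using Suc.hyps by (intro frac_le) (auto simp: power2_eq_square algebra_simps add_pos_pos)
  also have "\<dots> = 1 / real n - 1 / real (Suc n)"
    using Suc.hyps by (simp add: field_simps)
  finally show ?case using Suc.IH by simp
qed simp

lemma sum_inverse_squares_le: "(\<Sum>j=1..n. 1 / real j ^ 2) \<le> 2"
proof (cases "n = 0")
  case False
  then have "2 - 1 / real n \<le> 2" by simp
  with False show ?thesis using sum_inverse_squares_le_two_minus[of n] by linarith
qed simp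

lemma sum_vpairs_inverse_square_length_le:
  "(\<Sum>e\<in>vpairs N. 1 / real (snd e - fst e) ^ 2) \<le> 2 * real N"
proof -
  have row: "(\<Sum>y\<in>{x<..N}. 1 / real (y - x) ^ 2) \<le> 2" for x
  proof -
    have "(\<Sum>y\<in>{x<..N}. 1 / real (y - x) ^ 2) = (\<Sum>j=1..N-x. 1 / real j ^ 2)"
      by (rule sum.reindex_bij_witness[of _ "\<lambda>j. j + x" "\<lambda>y. y - x"]) auto
    then show ?thesis using sum_inverse_squares_le by simp
  qed
  have "vpairs N = Sigma {1..N} (\<lambda>x. {x<..N})" by (auto simp: vpairs_def)
  then have "(\<Sum>e\<in>vpairs N. 1 / real (snd e - fst e) ^ 2)
      = (\<Sum>x\<in>{1..N}. \<Sum>y\<in>{x<..N}. 1 / real (y - x) ^ 2)"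
    by (subst sum.Sigma) (auto intro!: sum.cong simp: split_def)
  also have "\<dots> \<le> (\<Sum>x\<in>{1..N}. 2)" by (rule sum_mono) (rule row)
  finally show ?thesis by simp
qed

lemma edge_prob_le_inverse_square:
  fixes \<gamma> L :: real
  assumes "\<gamma> > 0" and "1 \<le> L" and "L < real (snd e - fst e)"
    and ln_le: "4 * ln (real (snd e - fst e)) \<le> real (snd e - fst e) powr \<gamma>"
  shows "edge_prob \<gamma> e \<le> exp (- (L powr \<gamma>) / 2) / real (snd e - fst e) ^ 2"
proof -
  define k where "k = real (snd e - fst e)"
  have "k > 1" using assms k_def by simp
  then have "edge_prob \<gamma> e = exp (- (k powr \<gamma>))"
    by (auto simp: edge_prob_def k_def)
  also have "\<dots> \<le> exp (- (L powr \<gamma>) / 2 - 2 * ln k)"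
  proof -
    \<comment> \<open>half of k^\<gamma> dominates L^\<gamma>/2, the other half dominates 2 ln k\<close>
    have "L powr \<gamma> \<le> k powr \<gamma>" using assms by (intro powr_mono2) (auto simp: k_def)
    moreover have "4 * ln k \<le> k powr \<gamma>" using ln_le by (simp add: k_def)
    ultimately show ?thesis by simp
  qed
  also have "\<dots> = exp (- (L powr \<gamma>) / 2) / k ^ 2"
  proof -
    have "2 * ln k = ln (k ^ 2)" using \<open>k > 1\<close> by (simp add: ln_realpow)
    then have "exp (2 * ln k) = k ^ 2" using \<open>k > 1\<close> by simp
    then show ?thesis by (simp add: exp_diff)
  qed
  finally show ?thesis unfolding k_def .
qed

lemma sum_edge_prob_long_edges_le:
  fixes \<gamma> L :: real
  assumes "\<gamma> > 0" and "1 \<le> L" and "\<forall>x\<ge>L. 4 * ln x \<le> x powr \<gamma>"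
  shows "(\<Sum>e\<in>long_edges L (vpairs N). edge_prob \<gamma> e) \<le> 2 * real N * exp (- (L powr \<gamma>) / 2)"
proof -
  let ?C = "exp (- (L powr \<gamma>) / 2)"
  have "(\<Sum>e\<in>long_edges L (vpairs N). edge_prob \<gamma> e)
      \<le> (\<Sum>e\<in>long_edges L (vpairs N). ?C / real (snd e - fst e) ^ 2)"
    using assms by (intro sum_mono edge_prob_le_inverse_square) (auto simp: long_edges_def)
  also have "\<dots> \<le> (\<Sum>e\<in>vpairs N. ?C / real (snd e - fst e) ^ 2)"
    by (rule sum_mono2) (auto simp: finite_vpairs long_edges_def)
  also have "\<dots> = ?C * (\<Sum>e\<in>vpairs N. 1 / real (snd e - fst e) ^ 2)"
    by (simp add: sum_distrib_left)
  also have "\<dots> \<le> ?C * (2 * real N)"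
    by (intro mult_left_mono sum_vpairs_inverse_square_length_le) simp
  finally show ?thesis by (simp add: mult_ac)
qed

lemma prob_rand_graph_many_long_edges_le:
  fixes \<gamma> \<epsilon> L :: real
  assumes "\<gamma> > 0" and "\<epsilon> > 0" and "1 \<le> L" and "\<forall>x\<ge>L. 4 * ln x \<le> x powr \<gamma>"
    and u_ge: "2 \<le> L powr (\<gamma> / 8)" and u_small: "2 * L powr (\<gamma> / 8) / \<epsilon> \<le> L powr \<gamma> / 2"
  shows "measure_pmf.prob (rand_graph N \<gamma>) {E. real (card (long_edges L E)) > \<epsilon> * real N}
           \<le> exp (- (L powr (\<gamma> / 8)) * real N)"
proof -
  define u where "u = L powr (\<gamma> / 8)"
  define t where "t = 2 * u / \<epsilon>"
  define B where "B = (\<Sum>e\<in>long_edges L (vpairs N). edge_prob \<gamma> e)"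
  have "t > 0" using u_ge \<open>\<epsilon> > 0\<close> unfolding t_def u_def by (intro divide_pos_pos) auto
  have "B \<ge> 0" unfolding B_def by (intro sum_nonneg) (simp add: edge_prob_def)
  have "exp t * B \<le> exp t * (2 * real N * exp (- (L powr \<gamma>) / 2))"
    using sum_edge_prob_long_edges_le[OF assms(1,3,4), of N] unfolding B_def
    by (intro mult_left_mono) auto
  also have "\<dots> = 2 * real N * exp (t - L powr \<gamma> / 2)"
    by (simp add: mult_ac flip: exp_add)
  also have "\<dots> \<le> 2 * real N"
  proof -
    have "exp (t - L powr \<gamma> / 2) \<le> 1" using u_small by (simp add: t_def u_def)
    then show ?thesis by (simp add: mult_left_le)
  qed
  finally have "(exp t - 1) * B - t * (\<epsilon> * real N) \<le> 2 * real N - 2 * u * real N"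
    using \<open>B \<ge> 0\<close> \<open>\<epsilon> > 0\<close> by (simp add: t_def algebra_simps)
  also have "\<dots> \<le> - u * real N"
    using mult_right_mono[OF u_ge, of "real N"] by (simp add: u_def algebra_simps)
  finally have "exp ((exp t - 1) * B - t * (\<epsilon> * real N)) \<le> exp (- u * real N)"
    by simp
  then show ?thesis
    using prob_rand_graph_long_edges_gt_le[OF \<open>t > 0\<close>, where c = "\<epsilon> * real N"]
    unfolding B_def u_def by (rule order_trans[rotated])
qed

theorem lemma10:
  fixes \<gamma> \<epsilon> :: real
  assumes "\<gamma> > 0" and "\<epsilon> > 0"
  shows "\<forall>\<^sub>F L in at_top. \<forall>N::nat. N > 1 \<longrightarrow>
           measure_pmf.prob (rand_graph N \<gamma>)
             {E. real (card (long_edges L E)) > \<epsilon> * real N}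
           \<le> exp (- (L powr (\<gamma> / 8)) * real N)"
proof -
  have "\<forall>\<^sub>F x in at_top. 4 * ln x \<le> x powr \<gamma>"
    using assms by real_asymp
  moreover have "\<forall>\<^sub>F L in at_top. 2 \<le> L powr (\<gamma> / 8)"
    using assms by real_asymp
  moreover have "\<forall>\<^sub>F L in at_top. 2 * L powr (\<gamma> / 8) / \<epsilon> \<le> L powr \<gamma> / 2"
    using assms by real_asymp
  ultimately have "\<forall>\<^sub>F L in at_top. 1 \<le> L \<and> (\<forall>x\<ge>L. 4 * ln x \<le> x powr \<gamma>)
      \<and> 2 \<le> L powr (\<gamma> / 8) \<and> 2 * L powr (\<gamma> / 8) / \<epsilon> \<le> L powr \<gamma> / 2"
    by (intro eventually_conj eventually_ge_at_top eventually_all_ge_at_top)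
  then show ?thesis
    by eventually_elim (use assms prob_rand_graph_many_long_edges_le in blast)
qed

end
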